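(* Let $\mathcal{H}$ be a real Hilbert space of dimension $d$, $G>0$, $\mathcal{G}=\{g\in\mathcal{H}:\|g\|\le G\}$, $\theta\in\mathcal{H}$ fixed, and $h:\mathbb{R}\to\mathbb{R}$ an even convex function that is increasing on $[0,\infty)$. Consider the one-round game \[ H=\min_{w\in\mathcal{H}}\max_{g\in\mathcal{G}}\ \langle w,g\rangle+h(\|\theta-g\|). \] If $d=1$, or if $d>1$, $h$ is twice differentiable, and $h''(x)>h'(x)/x$ for all $x>0$, then \[ H=\frac{h(\|\theta\|+G)+h(\|\theta\|-G)}{2}\qquad\text{and}\qquad w^*=\hat\theta\,\frac{h(\|\theta\|+G)-h(\|\theta\|-G)}{2G}, \] and any $g^*$ with $|\langle\theta,g^*\rangle|=G\|\theta\|$ and $\|g^*\|=G$ is a minimax play for the adversary.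
   Context: Write $H(w,g)=\langle w,g\rangle+h(\|\theta-g\|)$. $w^*=\arg\min_w\max_{g\in\mathcal{G}}H(w,g)$ is the minimax play of the player, and a minimax play of the adversary is a $g^*\in\arg\max_{g\in\mathcal{G}}H(w^*,g)$. $\hat\theta=\theta/\|\theta\|$ if $\theta\ne0$ and $\hat\theta=0$ otherwise. *)

theory Defs
  imports "HOL-Analysis.Analysis"
begin

definition game_payoff :: "(real \<Rightarrow> real) \<Rightarrow> 'a::real_inner \<Rightarrow> 'a \<Rightarrow> 'a \<Rightarrow> real" where
  "game_payoff h \<theta> w g = inner w g + h (norm (\<theta> - g))"

definition adv_set :: "real \<Rightarrow> 'a::real_normed_vector set" where
  "adv_set G = {g. norm g \<le> G}"

definition worst_payoff :: "(real \<Rightarrow> real) \<Rightarrow> 'a::real_inner \<Rightarrow> real \<Rightarrow> 'a \<Rightarrow> real" where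
  "worst_payoff h \<theta> G w = (SUP g\<in>adv_set G. game_payoff h \<theta> w g)"

definition minimax_value :: "(real \<Rightarrow> real) \<Rightarrow> 'a::real_inner \<Rightarrow> real \<Rightarrow> real" where
  "minimax_value h \<theta> G = (INF w. worst_payoff h \<theta> G w)"

definition unit_dir :: "'a::real_normed_vector \<Rightarrow> 'a" where
  "unit_dir \<theta> = (if \<theta> = 0 then 0 else (1 / norm \<theta>) *\<^sub>R \<theta>)"

end

theory Submission imports Defs begin

text \<open>Write \<open>\<theta> = r e\<close> with \<open>\<parallel>e\<parallel> = 1\<close> and \<open>r = \<parallel>\<theta>\<parallel>\<close>. Against any \<open>w\<close>, the adversary
  playing \<open>G e\<close> or \<open>-G e\<close> makes the inner-product terms cancel on average, so every \<open>w\<close> concedes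
  at least \<open>V = (h(r + G) + h(r - G))/2\<close>. Conversely, with \<open>a = \<langle>e, g\<rangle> \<in> [-G, G]\<close> the loss
  \<open>h(\<parallel>\<theta> - g\<parallel>)\<close> is bounded by a convex function \<open>\<psi>(a)\<close> with \<open>\<psi>(-G) = h(r + G)\<close> and
  \<open>\<psi>(G) = h(r - G)\<close>: for \<open>d = 1\<close> it is \<open>h(r - a)\<close>, for \<open>d > 1\<close> it is \<open>h(\<surd>(r\<^sup>2 + G\<^sup>2 - 2ra))\<close>, convex because
  the curvature condition makes \<open>h \<circ> \<surd>\<close> convex. Hence \<open>\<psi>\<close> lies below its chord, and the player
  \<open>w = slope(chord) \<cdot> e\<close> cancels the chord's linear part, leaving exactly \<open>V\<close>.\<close>

lemma convex_on_compose_affine: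
  fixes f :: "real \<Rightarrow> real"
  assumes cv: "convex_on T f" and S: "convex S" and maps: "\<And>x. x \<in> S \<Longrightarrow> p + q * x \<in> T"
  shows "convex_on S (\<lambda>x. f (p + q * x))"
proof (rule convex_onI[OF _ S])
  fix t x y :: real assume t: "0 < t" "t < 1" and xy: "x \<in> S" "y \<in> S"
  have "p + q * ((1 - t) *\<^sub>R x + t *\<^sub>R y) = (1 - t) *\<^sub>R (p + q * x) + t *\<^sub>R (p + q * y)"
    by (simp add: algebra_simps)
  then show "f (p + q * ((1 - t) *\<^sub>R x + t *\<^sub>R y)) \<le> (1 - t) * f (p + q * x) + t * f (p + q * y)"
    using convex_onD[OF cv, of t "p + q * x" "p + q * y"] t maps xy by simp
qed

lemma convex_on_atLeast_extend:
  fixes f :: "real \<Rightarrow> real"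
  assumes cv: "convex_on {a<..} f" and ct: "continuous_on {a..} f"
  shows "convex_on {a..} f"
proof (rule convex_on_linorderI)
  show "convex {a..}" by simp
  fix t x y :: real assume t: "0 < t" "t < 1" and xy: "x \<in> {a..}" "y \<in> {a..}" "x < y"
  show "f ((1 - t) *\<^sub>R x + t *\<^sub>R y) \<le> (1 - t) * f x + t * f y"
  proof (cases "x = a")
    case False
    then show ?thesis using convex_onD[OF cv, of t x y] t xy by simp
  next
    case True
    have above_a: "a \<le> (1 - t) * z + t * y" if "a \<le> z" for z
    proof -
      have "(1 - t) * a \<le> (1 - t) * z" "t * a \<le> t * y"
        using that t xy by (simp_all add: mult_left_mono)
      then show ?thesis by (simp add: algebra_simps)
    qed
    have near: "\<forall>\<^sub>F z in at_right a. P z" if "\<And>z. a < z \<Longrightarrow> z < y \<Longrightarrow> P z" for P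
      using eventually_at_rightI[of a y P] that xy by simp
    have "((\<lambda>z. f ((1 - t) * z + t * y)) \<longlongrightarrow> f ((1 - t) * a + t * y)) (at_right a)"
    proof (rule continuous_on_tendsto_compose[OF ct])
      show "((\<lambda>z. (1 - t) * z + t * y) \<longlongrightarrow> (1 - t) * a + t * y) (at_right a)"
        by (intro tendsto_intros)
      show "(1 - t) * a + t * y \<in> {a..}"
        using above_a by simp
      show "\<forall>\<^sub>F z in at_right a. (1 - t) * z + t * y \<in> {a..}"
        by (rule near) (simp add: above_a)
    qed
    moreover have "(f \<longlongrightarrow> f a) (at_right a)"
      using ct by (auto simp: continuous_on_def intro: tendsto_within_subset)
    then have "((\<lambda>z. (1 - t) * f z + t * f y) \<longlongrightarrow> (1 - t) * f a + t * f y) (at_right a)"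
      by (intro tendsto_intros)
    moreover have "\<forall>\<^sub>F z in at_right a. f ((1 - t) * z + t * y) \<le> (1 - t) * f z + t * f y"
      by (rule near) (use convex_onD[OF cv, of t _ y] t xy in simp)
    ultimately have "f ((1 - t) * a + t * y) \<le> (1 - t) * f a + t * f y"
      by (intro tendsto_le[OF trivial_limit_at_right_real])
    then show ?thesis using True by simp
  qed
qed

text \<open>At \<open>s = x\<^sup>2\<close> the second derivative of \<open>h \<circ> \<surd>\<close> is \<open>(h''(x) - h'(x)/x) / (4x\<^sup>2)\<close>.\<close>

lemma convex_on_comp_sqrt:
  fixes h :: "real \<Rightarrow> real"
  assumes d1: "\<And>x. h differentiable at x" and d2: "\<And>x. deriv h differentiable at x"
    and curv: "\<And>x. x > 0 \<Longrightarrow> deriv h x / x \<le> deriv (deriv h) x"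
  shows "convex_on {0..} (\<lambda>s. h (sqrt s))"
proof (rule convex_on_atLeast_extend)
  have h': "(h has_real_derivative deriv h x) (at x)" for x
    using d1 DERIV_deriv_iff_real_differentiable by blast
  have h'': "(deriv h has_real_derivative deriv (deriv h) x) (at x)" for x
    using d2 DERIV_deriv_iff_real_differentiable by blast
  have "continuous_on UNIV h"
    using d1 by (simp add: continuous_at_imp_continuous_on differentiable_imp_continuous_within)
  then show "continuous_on {0..} (\<lambda>s. h (sqrt s))"
    by (rule continuous_on_compose2[OF _ continuous_on_real_sqrt]) auto
  show "convex_on {0<..} (\<lambda>s. h (sqrt s))"
  proof (rule f''_ge0_imp_convex[where f' = "\<lambda>s. deriv h (sqrt s) / (2 * sqrt s)"
      and f'' = "\<lambda>s. (deriv (deriv h) (sqrt s) - deriv h (sqrt s) / sqrt s) / (4 * s)"])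
    fix s :: real assume "s \<in> {0<..}"
    then have s: "s > 0" by simp
    have sqrt': "(sqrt has_real_derivative inverse (sqrt s) / 2) (at s)"
      using s by (rule DERIV_real_sqrt)
    show "((\<lambda>s. h (sqrt s)) has_real_derivative deriv h (sqrt s) / (2 * sqrt s)) (at s)"
      using DERIV_chain2[OF h' sqrt'] by (simp add: field_simps)
    have "((\<lambda>s. deriv h (sqrt s) / (2 * sqrt s)) has_real_derivative
       ((deriv (deriv h) (sqrt s) * (inverse (sqrt s) / 2)) * (2 * sqrt s)
         - deriv h (sqrt s) * (2 * (inverse (sqrt s) / 2))) / ((2 * sqrt s) * (2 * sqrt s))) (at s)"
      using s by (intro DERIV_divide DERIV_chain2[OF h'' sqrt'] DERIV_cmult sqrt') simp
    moreover have "((deriv (deriv h) (sqrt s) * (inverse (sqrt s) / 2)) * (2 * sqrt s)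
         - deriv h (sqrt s) * (2 * (inverse (sqrt s) / 2))) / ((2 * sqrt s) * (2 * sqrt s))
       = (deriv (deriv h) (sqrt s) - deriv h (sqrt s) / sqrt s) / (4 * s)"
      using s by (simp add: field_simps)
    ultimately show "((\<lambda>s. deriv h (sqrt s) / (2 * sqrt s)) has_real_derivative
       (deriv (deriv h) (sqrt s) - deriv h (sqrt s) / sqrt s) / (4 * s)) (at s)" by simp
    show "0 \<le> (deriv (deriv h) (sqrt s) - deriv h (sqrt s) / sqrt s) / (4 * s)"
      using curv[of "sqrt s"] s by simp
  qed simp
qed

lemma norm_scaleR_unit_diff_power2:
  fixes e g :: "'a::real_inner"
  assumes "norm e = 1"
  shows "(norm (r *\<^sub>R e - g))\<^sup>2 = r\<^sup>2 - 2 * r * inner e g + (norm g)\<^sup>2"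
proof -
  have "inner e e = 1" using assms by (simp add: dot_square_norm)
  then show ?thesis
    unfolding power2_norm_eq_inner
    by (simp add: inner_diff_left inner_diff_right inner_commute power2_eq_square)
qed

lemma norm_scaleR_unit_diff_le_sqrt:
  fixes e g :: "'a::real_inner"
  assumes "norm e = 1" "norm g \<le> G"
  shows "norm (r *\<^sub>R e - g) \<le> sqrt (r\<^sup>2 + G\<^sup>2 - 2 * r * inner e g)"
proof -
  have "(norm g)\<^sup>2 \<le> G\<^sup>2"
    using assms(2) norm_ge_zero[of g] by (intro power_mono) auto
  then have "(norm (r *\<^sub>R e - g))\<^sup>2 \<le> r\<^sup>2 + G\<^sup>2 - 2 * r * inner e g"
    using norm_scaleR_unit_diff_power2[OF assms(1)] by simp
  then show ?thesis
    using real_sqrt_le_mono by fastforce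
qed

lemma unit_vector_expansion_DIM_1:
  fixes e x :: "'a::euclidean_space"
  assumes "DIM('a) = 1" "norm e = 1"
  shows "x = inner e x *\<^sub>R e"
proof -
  obtain b where B: "Basis = {b::'a}" using assms(1) by (metis card_1_singletonE)
  then have bb: "inner b b = 1" by (metis insertI1 inner_Basis)
  have expand: "y = inner y b *\<^sub>R b" for y :: 'a
    using euclidean_representation[of y] unfolding B by simp
  have "norm b = 1" using bb by (simp add: norm_eq_1)
  then have "\<bar>inner e b\<bar> = 1"
    using assms(2) expand[of e] by (metis norm_scaleR mult_1_right)
  then have "inner e b * inner e b = 1"
    by (metis abs_mult_self_eq mult_1_right)
  moreover have "inner e x *\<^sub>R e = (inner e b * inner e b * inner x b) *\<^sub>R b"
    by (subst (1 2) expand[of e], subst expand[of x]) (simp add: bb)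
  ultimately show ?thesis
    using expand[of x] by simp
qed

lemma norm_scaleR_unit_diff_DIM_1:
  fixes e g :: "'a::euclidean_space"
  assumes "DIM('a) = 1" "norm e = 1"
  shows "norm (r *\<^sub>R e - g) = \<bar>r - inner e g\<bar>"
proof -
  have "r *\<^sub>R e - g = (r - inner e g) *\<^sub>R e"
    using unit_vector_expansion_DIM_1[OF assms, of g] by (simp add: algebra_simps)
  then show ?thesis using assms(2) by simp
qed

lemma unit_direction:
  fixes \<theta> :: "'a::euclidean_space"
  obtains e where "norm e = 1" "\<theta> = norm \<theta> *\<^sub>R e" "\<theta> \<noteq> 0 \<Longrightarrow> unit_dir \<theta> = e"
proof (cases "\<theta> = 0")
  case True
  obtain b :: 'a where "b \<in> Basis" using nonempty_Basis by blast
  then show ?thesis using that[of b] True by simp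
next
  case False
  then show ?thesis using that[of "unit_dir \<theta>"] by (simp add: unit_dir_def)
qed

lemma even_fun_abs:
  fixes h :: "real \<Rightarrow> 'b"
  assumes "\<And>x. h (- x) = h x"
  shows "h \<bar>x\<bar> = h x"
  using assms by (cases "x \<ge> 0") (auto simp: abs_if)

lemma bdd_above_game_payoff:
  fixes \<theta> w :: "'a::real_inner"
  assumes h_mono: "mono_on {0..} h"
  shows "bdd_above (game_payoff h \<theta> w ` adv_set G)"
proof (rule bdd_aboveI2)
  fix g :: 'a assume "g \<in> adv_set G"
  then have g: "norm g \<le> G" by (simp add: adv_set_def)
  have "inner w g \<le> norm w * G"
    using norm_cauchy_schwarz[of w g] mult_left_mono[OF g norm_ge_zero[of w]] by linarith
  moreover have "norm (\<theta> - g) \<le> norm \<theta> + G"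
    using norm_triangle_ineq4[of \<theta> g] g by linarith
  then have "h (norm (\<theta> - g)) \<le> h (norm \<theta> + G)"
    by (intro mono_onD[OF h_mono]) (auto intro: order_trans[OF norm_ge_zero])
  ultimately show "game_payoff h \<theta> w g \<le> norm w * G + h (norm \<theta> + G)"
    by (simp add: game_payoff_def)
qed

lemma game_payoff_le_chord:
  fixes \<theta> e g :: "'a::real_inner" and \<psi> :: "real \<Rightarrow> real"
  assumes G: "G > 0" and e: "norm e = 1" and g: "g \<in> adv_set G"
    and \<psi>: "convex_on {-G..G} \<psi>" and loss: "h (norm (\<theta> - g)) \<le> \<psi> (inner e g)"
  shows "game_payoff h \<theta> (((\<psi> (-G) - \<psi> G) / (2 * G)) *\<^sub>R e) g \<le> (\<psi> (-G) + \<psi> G) / 2"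
proof -
  define a where "a = inner e g"
  define c where "c = (\<psi> (-G) - \<psi> G) / (2 * G)"
  have "\<bar>a\<bar> \<le> G"
    using Cauchy_Schwarz_ineq2[of e g] e g by (simp add: a_def adv_set_def)
  then have "\<psi> a \<le> (\<psi> G - \<psi> (-G)) / (G - -G) * (a - -G) + \<psi> (-G)"
    by (intro convex_onD_Icc' \<psi>) auto
  also have "\<dots> = - c * a - c * G + \<psi> (-G)"
    using G by (simp add: c_def field_simps)
  finally have "c * a + \<psi> a \<le> \<psi> (-G) - c * G" by simp
  moreover have "c * G = (\<psi> (-G) - \<psi> G) / 2"
    using G by (simp add: c_def)
  moreover have "game_payoff h \<theta> (c *\<^sub>R e) g \<le> c * a + \<psi> a"
    using loss by (simp add: game_payoff_def a_def)
  ultimately show ?thesis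
    unfolding c_def[symmetric] by argo
qed

lemma value_le_worst_payoff:
  fixes \<theta> e w :: "'a::real_inner"
  assumes G: "G \<ge> 0" and h_even: "\<And>x. h (- x) = h x" and h_mono: "mono_on {0..} h"
    and e: "norm e = 1" and \<theta>: "\<theta> = r *\<^sub>R e"
  shows "(h (r + G) + h (r - G)) / 2 \<le> worst_payoff h \<theta> G w"
proof -
  have pm: "G *\<^sub>R e \<in> adv_set G" "(- G) *\<^sub>R e \<in> adv_set G"
    using e G by (auto simp: adv_set_def)
  have "\<theta> - G *\<^sub>R e = (r - G) *\<^sub>R e" "\<theta> - (- G) *\<^sub>R e = (r + G) *\<^sub>R e"
    using \<theta> by (simp_all add: algebra_simps)
  then have "game_payoff h \<theta> w (G *\<^sub>R e) + game_payoff h \<theta> w ((- G) *\<^sub>R e)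
      = h (r + G) + h (r - G)"
    using e by (simp add: game_payoff_def even_fun_abs[of h, OF h_even])
  moreover have "game_payoff h \<theta> w g \<le> worst_payoff h \<theta> G w" if "g \<in> adv_set G" for g
    unfolding worst_payoff_def using that bdd_above_game_payoff[OF h_mono] by (rule cSUP_upper)
  then have "game_payoff h \<theta> w (G *\<^sub>R e) + game_payoff h \<theta> w ((- G) *\<^sub>R e)
      \<le> 2 * worst_payoff h \<theta> G w"
    using pm by (smt (verit))
  ultimately show ?thesis by simp
qed

lemma loss_profile_DIM_1:
  fixes \<theta> e :: "'a::euclidean_space"
  assumes "DIM('a) = 1" and h_even: "\<And>x. h (- x) = h x" and h_convex: "convex_on UNIV h"
    and e: "norm e = 1"
    and \<theta>: "\<theta> = r *\<^sub>R e"
  obtains \<psi> where "convex_on {-G..G} \<psi>" "\<psi> (-G) = h (r + G)" "\<psi> G = h (r - G)"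
    "\<And>g. h (norm (\<theta> - g)) \<le> \<psi> (inner e g)"
proof
  show "convex_on {-G..G} (\<lambda>a. h (r + (-1) * a))"
    by (rule convex_on_compose_affine[OF h_convex]) auto
  show "h (norm (\<theta> - g)) \<le> h (r + (-1) * inner e g)" for g
    using norm_scaleR_unit_diff_DIM_1[OF assms(1) e] \<theta> by (simp add: even_fun_abs[of h, OF h_even])
qed simp_all

lemma loss_profile_sqrt:
  fixes \<theta> e :: "'a::real_inner"
  assumes h_sqrt: "convex_on {0..} (\<lambda>s. h (sqrt s))" and h_even: "\<And>x. h (- x) = h x"
    and h_mono: "mono_on {0..} h" and e: "norm e = 1" and r: "r \<ge> 0" and \<theta>: "\<theta> = r *\<^sub>R e"
  obtains \<psi> where "convex_on {-G..G} \<psi>" "\<psi> (-G) = h (r + G)" "\<psi> G = h (r - G)"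
    "\<And>g. g \<in> adv_set G \<Longrightarrow> h (norm (\<theta> - g)) \<le> \<psi> (inner e g)"
proof
  define \<psi> where "\<psi> a = h (sqrt (r\<^sup>2 + G\<^sup>2 + (-2 * r) * a))" for a
  have "r\<^sup>2 + G\<^sup>2 + (-2 * r) * a \<in> {0..}" if "a \<in> {-G..G}" for a
  proof -
    have "r * a \<le> r * G" using that r by (simp add: mult_left_mono)
    then have "(r - G)\<^sup>2 \<le> r\<^sup>2 + G\<^sup>2 + (-2 * r) * a" by (simp add: power2_diff)
    then have "0 \<le> r\<^sup>2 + G\<^sup>2 + (-2 * r) * a" using zero_le_power2[of "r - G"] by linarith
    then show ?thesis by simp
  qed
  then show "convex_on {-G..G} \<psi>"
    unfolding \<psi>_def by (intro convex_on_compose_affine[OF h_sqrt]) auto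
  have "r\<^sup>2 + G\<^sup>2 + (-2 * r) * (-G) = (r + G)\<^sup>2" "r\<^sup>2 + G\<^sup>2 + (-2 * r) * G = (r - G)\<^sup>2"
    by (simp_all add: power2_sum power2_diff)
  then show "\<psi> (-G) = h (r + G)" "\<psi> G = h (r - G)"
    by (simp_all add: \<psi>_def even_fun_abs[of h, OF h_even])
  fix g :: 'a assume "g \<in> adv_set G"
  then have le: "norm (\<theta> - g) \<le> sqrt (r\<^sup>2 + G\<^sup>2 + (-2 * r) * inner e g)"
    using norm_scaleR_unit_diff_le_sqrt[OF e, of g G r] \<theta> by (simp add: adv_set_def)
  have "sqrt (r\<^sup>2 + G\<^sup>2 + (-2 * r) * inner e g) \<in> {0..}"
    using order_trans[OF norm_ge_zero le] by simp
  then show "h (norm (\<theta> - g)) \<le> \<psi> (inner e g)"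
    unfolding \<psi>_def using mono_onD[OF h_mono _ _ le] by simp
qed

lemma game_payoff_eq_value_at_extreme:
  fixes \<theta> e g :: "'a::real_inner"
  assumes G: "G > 0" and h_even: "\<And>x. h (- x) = h x" and e: "norm e = 1" and r: "r \<ge> 0"
    and \<theta>: "\<theta> = r *\<^sub>R e" and g: "\<bar>inner \<theta> g\<bar> = G * r" "norm g = G"
  shows "game_payoff h \<theta> (((h (r + G) - h (r - G)) / (2 * G)) *\<^sub>R e) g = (h (r + G) + h (r - G)) / 2"
proof (cases "r = 0")
  case True
  then show ?thesis using \<theta> g(2) h_even[of G] by (simp add: game_payoff_def)
next
  case False
  define a where "a = inner e g"
  have "\<bar>a\<bar> = G"
    using g(1) \<theta> r False by (simp add: a_def abs_mult)
  then have "(norm g)\<^sup>2 = a\<^sup>2"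
    using g(2) power2_abs[of a] by simp
  then have "(norm (\<theta> - g))\<^sup>2 = (r - a)\<^sup>2"
    using norm_scaleR_unit_diff_power2[OF e, of r g] \<theta> by (simp add: a_def power2_diff)
  then have "norm (\<theta> - g) = \<bar>r - a\<bar>"
    by (metis norm_ge_zero real_sqrt_abs real_sqrt_unique)
  then have "game_payoff h \<theta> (((h (r + G) - h (r - G)) / (2 * G)) *\<^sub>R e) g
      = (h (r + G) - h (r - G)) / (2 * G) * a + h (r - a)"
    by (simp add: game_payoff_def a_def even_fun_abs[of h, OF h_even])
  also have "\<dots> = (h (r + G) + h (r - G)) / 2"
    using \<open>\<bar>a\<bar> = G\<close> G by (cases "a \<ge> 0") (auto simp: field_simps)
  finally show ?thesis .
qed

lemma minimax_value_eqI:
  assumes "\<And>w. V \<le> worst_payoff h \<theta> G w" and "worst_payoff h \<theta> G w\<^sub>0 = V"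
  shows "minimax_value h \<theta> G = V"
  unfolding minimax_value_def
proof (rule antisym)
  show "(INF w. worst_payoff h \<theta> G w) \<le> V"
    using assms by (metis bdd_belowI2 cINF_lower UNIV_I)
  show "V \<le> (INF w. worst_payoff h \<theta> G w)"
    using assms(1) by (intro cINF_greatest) auto
qed

lemma worst_payoff_le_value:
  fixes \<theta> e :: "'a::euclidean_space"
  assumes G: "G > 0" and h_even: "\<And>x. h (- x) = h x" and h_convex: "convex_on UNIV h"
    and h_mono: "mono_on {0..} h" and shape: "DIM('a) = 1 \<or> convex_on {0..} (\<lambda>s. h (sqrt s))"
    and e: "norm e = 1" and r: "r \<ge> 0" and \<theta>: "\<theta> = r *\<^sub>R e"
  shows "worst_payoff h \<theta> G (((h (r + G) - h (r - G)) / (2 * G)) *\<^sub>R e) \<le> (h (r + G) + h (r - G)) / 2"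
proof -
  from shape obtain \<psi> where \<psi>: "convex_on {-G..G} \<psi>" "\<psi> (-G) = h (r + G)" "\<psi> G = h (r - G)"
    and loss: "\<And>g. g \<in> adv_set G \<Longrightarrow> h (norm (\<theta> - g)) \<le> \<psi> (inner e g)"
  proof
    assume "DIM('a) = 1"
    then show thesis using loss_profile_DIM_1[OF _ h_even h_convex e \<theta>] that by metis
  next
    assume "convex_on {0..} (\<lambda>s. h (sqrt s))"
    then show thesis using loss_profile_sqrt[OF _ h_even h_mono e r \<theta>] that by metis
  qed
  have "game_payoff h \<theta> (((h (r + G) - h (r - G)) / (2 * G)) *\<^sub>R e) g \<le> (h (r + G) + h (r - G)) / 2"
    if "g \<in> adv_set G" for g
    using game_payoff_le_chord[where h=h and \<theta>=\<theta>, OF G e that \<psi>(1) loss[OF that]] unfolding \<psi>(2,3) .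
  moreover have "adv_set G \<noteq> {}"
    using G by (auto simp: adv_set_def intro: exI[of _ 0])
  ultimately show ?thesis
    unfolding worst_payoff_def by (intro cSUP_least)
qed

theorem lemma8:
  fixes \<theta> :: "'a::euclidean_space" and G :: real and h :: "real \<Rightarrow> real"
  assumes G_pos: "G > 0"
    and h_even: "\<forall>x. h (- x) = h x"
    and h_convex: "convex_on UNIV h"
    and h_incr: "mono_on {0..} h"
    and dim_cond: "DIM('a) = 1 \<or>
       (DIM('a) > 1 \<and> (\<forall>x. h differentiable at x) \<and> (\<forall>x. deriv h differentiable at x) \<and>
        (\<forall>x>0. deriv (deriv h) x > deriv h x / x))"
  shows "minimax_value h \<theta> G = (h (norm \<theta> + G) + h (norm \<theta> - G)) / 2
    \<and> (let w = ((h (norm \<theta> + G) - h (norm \<theta> - G)) / (2 * G)) *\<^sub>R unit_dir \<theta> in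
         worst_payoff h \<theta> G w = minimax_value h \<theta> G
         \<and> (\<forall>g. \<bar>inner \<theta> g\<bar> = G * norm \<theta> \<and> norm g = G \<longrightarrow>
               g \<in> adv_set G \<and> game_payoff h \<theta> w g = worst_payoff h \<theta> G w))"
proof -
  define r where "r = norm \<theta>"
  define c where "c = (h (r + G) - h (r - G)) / (2 * G)"
  define V where "V = (h (r + G) + h (r - G)) / 2"
  have even: "\<And>x. h (- x) = h x" using h_even by simp
  obtain e where e: "norm e = 1" "\<theta> = r *\<^sub>R e" and dir: "\<theta> \<noteq> 0 \<Longrightarrow> unit_dir \<theta> = e"
    using unit_direction r_def by metis
  \<comment> \<open>for \<open>\<theta> = 0\<close> evenness gives \<open>c = 0\<close>, so the arbitrary choice of \<open>e\<close> is harmless\<close>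
  have w: "c *\<^sub>R unit_dir \<theta> = c *\<^sub>R e"
    using dir even[of G] by (cases "\<theta> = 0") (auto simp: c_def r_def)
  have shape: "DIM('a) = 1 \<or> convex_on {0..} (\<lambda>s. h (sqrt s))"
    using dim_cond by (auto intro!: convex_on_comp_sqrt less_imp_le)
  have lower: "V \<le> worst_payoff h \<theta> G w" for w
    unfolding V_def using value_le_worst_payoff[where h=h, OF _ even h_incr e] G_pos by simp
  have optimal: "worst_payoff h \<theta> G (c *\<^sub>R e) = V"
    using worst_payoff_le_value[where h=h, OF G_pos even h_convex h_incr shape e(1) _ e(2)] lower
    by (simp add: antisym c_def V_def r_def)
  have "minimax_value h \<theta> G = V"
    using lower optimal by (rule minimax_value_eqI)
  moreover have "g \<in> adv_set G \<and> game_payoff h \<theta> (c *\<^sub>R e) g = V"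
    if "\<bar>inner \<theta> g\<bar> = G * r" "norm g = G" for g
    using game_payoff_eq_value_at_extreme[where h=h, OF G_pos even e(1) _ e(2) that] that(2)
    by (simp add: adv_set_def c_def V_def r_def)
  ultimately show ?thesis
    unfolding Let_def r_def[symmetric] c_def[symmetric] V_def[symmetric] w optimal by simp
qed

end
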